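(* For every map $M$, any two members of $\Gamma(M)$ have the same deficiency.
   Context: A map is a triple $X=(C_X,v_X,f_X)$ where $C_X$ is a finite cubic graph (multiple edges allowed) and $v_X,f_X$ are disjoint perfect matchings whose union is a disjoint union of 4-cycles, the squares of $X$. $a_X=E(C_X)\setminus(v_X\cup f_X)$; $z_X$ is the perfect matching on $V(C_X)$ of diagonals of the squares; $Q_X=C_X\cup z_X$. $G_X$ has as vertices the cycles of $v_X\cup a_X$, as edges the squares of $X$, each square joining the cycles containing its two $v_X$-edges. The dual of $X$ is $(C_X,f_X,v_X)$ and the phial is $(Q_X\setminus v_X,z_X,f_X)$; the edge sets of the graphs of $X$, its dual and its phial are all identified with the squares of $X$. With $V_X,F_X,Z_X$ the $GF(2)$-coboundary spaces of the graphs of $X$, its dual and its phial, and $V_X^\perp$ the cycle space of $G_X$ (orthogonal complement w.r.t. $\langle A,B\rangle=|A\cap B|\bmod2$), the deficiency is $\mathrm{def}(X)=\dim V_X^\perp-\dim(F_X+Z_X)$ (one has $F_X+Z_X\subseteq V_X^\perp$). For a map $M$, $\Gamma(M)$ is the set of the six maps $(Q_M\setminus z_M,v_M,f_M)$, $(Q_M\setminus z_M,f_M,v_M)$, $(Q_M\setminus v_M,f_M,z_M)$, $(Q_M\setminus v_M,z_M,f_M)$, $(Q_M\setminus f_M,z_M,v_M)$, $(Q_M\setminus f_M,v_M,z_M)$. *)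

theory Defs
  imports Main "HOL.Vector_Spaces" "HOL-Library.Z2" "HOL-Library.Function_Algebras"
begin

text \<open>A perfect matching of the vertex set V of a loopless multigraph is
  encoded as a fixed-point-free involution m of V (m x is the partner of x).
  A map X = (C_X, v_X, f_X) is encoded by its vertex set V together with the
  three perfect matchings a_X, v_X, f_X whose (multi)union is the cubic graph C_X
  (a_X is automatically a perfect matching since C_X is cubic and v_X, f_X are
  perfect matchings).  The diagonal matching is z_X = v_X o f_X.
  GF(2) is the field bit; a subset of the squares is represented by its
  characteristic vector (a function from squares to bit, zero off the squares).\<close>

definition perfect_matching_on :: "'v set \<Rightarrow> ('v \<Rightarrow> 'v) \<Rightarrow> bool" where
  "perfect_matching_on V m \<longleftrightarrow> (\<forall>x\<in>V. m x \<in> V \<and> m x \<noteq> x \<and> m (m x) = x)"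

text \<open>(V, a, v, f) is a map: v and f disjoint perfect matchings whose union is a
  disjoint union of 4-cycles, a the remaining edges of the cubic graph.\<close>
definition is_map :: "'v set \<Rightarrow> ('v \<Rightarrow> 'v) \<Rightarrow> ('v \<Rightarrow> 'v) \<Rightarrow> ('v \<Rightarrow> 'v) \<Rightarrow> bool" where
  "is_map V a v f \<longleftrightarrow> finite V \<and> perfect_matching_on V a \<and> perfect_matching_on V v
     \<and> perfect_matching_on V f \<and> (\<forall>x\<in>V. v x \<noteq> f x \<and> v (f (v (f x))) = x)"

text \<open>The square (4-cycle of v \<union> f) through x.\<close>
definition square :: "('v \<Rightarrow> 'v) \<Rightarrow> ('v \<Rightarrow> 'v) \<Rightarrow> 'v \<Rightarrow> 'v set" where
  "square v f x = {x, v x, f x, v (f x)}"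

definition squares :: "'v set \<Rightarrow> ('v \<Rightarrow> 'v) \<Rightarrow> ('v \<Rightarrow> 'v) \<Rightarrow> 'v set set" where
  "squares V v f = square v f ` V"

definition cycle_of :: "'v set \<Rightarrow> ('v \<Rightarrow> 'v) \<Rightarrow> ('v \<Rightarrow> 'v) \<Rightarrow> 'v \<Rightarrow> 'v set" where
  "cycle_of V m1 m2 x =
     {y. (x, y) \<in> ({(u, m1 u) | u. u \<in> V} \<union> {(u, m2 u) | u. u \<in> V})\<^sup>*}"

text \<open>Graph G_X of the map (V,a,v,f): vertices are the cycles of v \<union> a, edges
  are the squares, the square through x joining the cycles containing its two
  v-edges {x, v x} and {f x, v (f x)}, i.e. the cycles of x and of f x.\<close>
definition graph_vertices :: "'v set \<Rightarrow> ('v \<Rightarrow> 'v) \<Rightarrow> ('v \<Rightarrow> 'v) \<Rightarrow> 'v set set" where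
  "graph_vertices V a v = cycle_of V v a ` V"

definition coboundary ::
  "'v set \<Rightarrow> ('v \<Rightarrow> 'v) \<Rightarrow> ('v \<Rightarrow> 'v) \<Rightarrow> ('v \<Rightarrow> 'v) \<Rightarrow> 'v set set \<Rightarrow> 'v set set" where
  "coboundary V a v f U =
     {s \<in> squares V v f. \<exists>x\<in>V. s = square v f x \<and>
        ((cycle_of V v a x \<in> U) \<noteq> (cycle_of V v a (f x) \<in> U))}"

definition indic :: "'v set set \<Rightarrow> 'v set \<Rightarrow> bit" where
  "indic A = (\<lambda>s. if s \<in> A then 1 else 0)"

definition gf2_scale :: "bit \<Rightarrow> ('v set \<Rightarrow> bit) \<Rightarrow> ('v set \<Rightarrow> bit)" where
  "gf2_scale c g = (\<lambda>s. c * g s)"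

abbreviation gf2_span where "gf2_span \<equiv> Modules.module.span gf2_scale"
abbreviation gf2_dim where "gf2_dim \<equiv> vector_space.dim gf2_scale"

definition cob_space :: "'v set \<Rightarrow> ('v \<Rightarrow> 'v) \<Rightarrow> ('v \<Rightarrow> 'v) \<Rightarrow> ('v \<Rightarrow> 'v) \<Rightarrow> ('v set \<Rightarrow> bit) set" where
  "cob_space V a v f =
     gf2_span {indic (coboundary V a v f U) | U. U \<subseteq> graph_vertices V a v}"

definition orth :: "'v set set \<Rightarrow> ('v set \<Rightarrow> bit) set \<Rightarrow> ('v set \<Rightarrow> bit) set" where
  "orth S W = {g. (\<forall>s. s \<notin> S \<longrightarrow> g s = 0) \<and> (\<forall>w\<in>W. (\<Sum>s\<in>S. g s * w s) = 0)}"

definition deficiency :: "'v set \<Rightarrow> ('v \<Rightarrow> 'v) \<times> ('v \<Rightarrow> 'v) \<times> ('v \<Rightarrow> 'v) \<Rightarrow> int" where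
  "deficiency V X = (case X of (a, v, f) \<Rightarrow>
     (let Vs = cob_space V a v f;
          Fs = cob_space V a f v;
          Zs = cob_space V a (v \<circ> f) f
      in int (gf2_dim (orth (squares V v f) Vs))
         - int (gf2_dim {x + y | x y. x \<in> Fs \<and> y \<in> Zs})))"

text \<open>Gamma(M) for M = (V,a,v,f), z = v o f.  All six maps have the same vertex set
  and the same a-matching (e.g. (Q\z, v, f) has a-edges Q\(z\<union>v\<union>f) = a).\<close>
definition Gamma :: "('v \<Rightarrow> 'v) \<Rightarrow> ('v \<Rightarrow> 'v) \<Rightarrow> ('v \<Rightarrow> 'v)
     \<Rightarrow> (('v \<Rightarrow> 'v) \<times> ('v \<Rightarrow> 'v) \<times> ('v \<Rightarrow> 'v)) set" where
  "Gamma a v f = (let z = v \<circ> f in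
     {(a, v, f), (a, f, v), (a, f, z), (a, z, f), (a, z, v), (a, v, z)})"

end

theory Submission
  imports Defs "HOL-Library.FuncSet"
begin

text \<open>Write z = v \<circ> f. Together with the identity, v, f and z form a Klein four-group acting on
  the vertices, and the members of Gamma(M) are the maps (a, p, q) for the orderings (p, q, r) of
  (v, f, z). As r x = p (q x), the cycles of p \<union> a through q x and through r x coincide, so the
  coboundary space P of the graph of (a, p, q) depends on p only; likewise Q and R. Counting over
  GF(2) shows that the orthogonal complement of P among the sets of squares S has dimension
  |S| - dim P, and that dim (Q + R) = dim Q + dim R - dim (Q \<inter> R). Moreover Q \<inter> R \<subseteq> P: if g is
  the coboundary of U in the graph of q and of U' in the graph of r, the two potentials differ by a
  function that is constant on the cycles of p \<union> a, and g is its coboundary in the graph of p.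
  Hence the deficiency is |S| - dim P - dim Q - dim R + dim (P \<inter> Q \<inter> R), symmetric in p, q, r.\<close>

section \<open>Finite subspaces over GF(2)\<close>

interpretation gf2: vector_space gf2_scale
  by unfold_locales (auto simp: gf2_scale_def fun_eq_iff algebra_simps)

lemma UNIV_bit: "UNIV = {0 :: bit, 1}"
  by auto

lemma card_UNIV_bit: "card (UNIV :: bit set) = 2"
  by (simp add: UNIV_bit)

lemma finite_UNIV_bit: "finite (UNIV :: bit set)"
  by (simp add: UNIV_bit)

lemma bitfun_add_self [simp]: "(g :: 'a \<Rightarrow> bit) + g = 0"
  by (simp add: fun_eq_iff)

context vector_space
begin

lemma card_span_independent:
  assumes "independent B" "finite B" "finite (UNIV :: 'a set)"
  shows "card (span B) = card (UNIV :: 'a set) ^ card B"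
proof -
  let ?comb = "\<lambda>u. \<Sum>v\<in>B. u v *s v"
  have "inj_on ?comb (B \<rightarrow>\<^sub>E UNIV)"
  proof (rule inj_onI)
    fix u u' assume u: "u \<in> B \<rightarrow>\<^sub>E UNIV" "u' \<in> B \<rightarrow>\<^sub>E UNIV" and "?comb u = ?comb u'"
    then have "(\<Sum>v\<in>B. (u v - u' v) *s v) = 0"
      by (simp add: scale_left_diff_distrib sum_subtractf)
    then have dependent: "dependent B" if "v \<in> B" "u v \<noteq> u' v" for v
      unfolding dependent_finite[OF assms(2)] using that by (intro exI[of _ "\<lambda>v. u v - u' v"]) auto
    show "u = u'"
      by (rule PiE_ext[OF u]) (use dependent assms(1) in blast)
  qed
  then have "card (?comb ` (B \<rightarrow>\<^sub>E UNIV)) = card (B \<rightarrow>\<^sub>E (UNIV :: 'a set))"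
    by (rule card_image)
  moreover have "?comb ` (B \<rightarrow>\<^sub>E UNIV) = span B"
  proof -
    have "?comb u \<in> ?comb ` (B \<rightarrow>\<^sub>E UNIV)" for u
    proof (rule image_eqI)
      show "?comb u = ?comb (restrict u B)"
        by (rule sum.cong) auto
    qed (rule restrict_PiE_iff[THEN iffD2], simp)
    then have "range ?comb \<subseteq> ?comb ` (B \<rightarrow>\<^sub>E UNIV)"
      by (rule image_subsetI)
    moreover have "?comb ` (B \<rightarrow>\<^sub>E UNIV) \<subseteq> range ?comb"
      by (rule image_mono) simp
    ultimately show ?thesis
      unfolding span_finite[OF assms(2)] by (rule equalityI[rotated])
  qed
  ultimately show ?thesis
    using assms(2)
    by (simp add: card_PiE)
qed

lemma bij_betw_Int_sums_fiber:
  assumes "subspace A" "subspace B" "x \<in> A" "y \<in> B"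
  shows "bij_betw (\<lambda>t. (x + t, y - t)) (A \<inter> B) {p \<in> A \<times> B. fst p + snd p = x + y}"
proof (rule bij_betw_byWitness[where f' = "\<lambda>p. fst p - x"])
  show "(\<lambda>t. (x + t, y - t)) ` (A \<inter> B) \<subseteq> {p \<in> A \<times> B. fst p + snd p = x + y}"
    using assms by (auto simp: subspace_add subspace_diff)
  show "(\<lambda>p. fst p - x) ` {p \<in> A \<times> B. fst p + snd p = x + y} \<subseteq> A \<inter> B"
  proof
    fix t assume "t \<in> (\<lambda>p. fst p - x) ` {p \<in> A \<times> B. fst p + snd p = x + y}"
    then obtain x' y' where x'y': "x' \<in> A" "y' \<in> B" "x' + y' = x + y" and t: "t = x' - x"
      by auto
    have "x' - x = y - y'"
      using x'y'(3) by (simp add: algebra_simps)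
    then show "t \<in> A \<inter> B"
      using x'y' assms t by (metis IntI subspace_diff)
  qed
  show "\<forall>p\<in>{p \<in> A \<times> B. fst p + snd p = x + y}. (x + (fst p - x), y - (fst p - x)) = p"
    by (auto simp: algebra_simps)
qed simp

lemma card_sums_mult_card_Int:
  assumes "subspace A" "subspace B" "finite A" "finite B"
  shows "card {x + y |x y. x \<in> A \<and> y \<in> B} * card (A \<inter> B) = card A * card B"
proof -
  let ?S = "{x + y |x y. x \<in> A \<and> y \<in> B}"
  let ?R = "\<lambda>p u. fst p + snd p = u"
  have S_image: "?S = (\<lambda>(x, y). x + y) ` (A \<times> B)"
    by auto
  have fiber: "card {p \<in> A \<times> B. ?R p u} = card (A \<inter> B)" if "u \<in> ?S" for u
  proof -
    obtain x y where "x \<in> A" "y \<in> B" "u = x + y"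
      using \<open>u \<in> ?S\<close> by blast
    then show ?thesis
      using bij_betw_same_card[OF bij_betw_Int_sums_fiber[OF assms(1,2)]] by simp
  qed
  have "(\<Sum>p\<in>A \<times> B. card {u \<in> ?S. ?R p u}) = card (A \<inter> B) * card ?S"
    by (rule sum_multicount) (use assms(3,4) S_image fiber in auto)
  moreover have "{u \<in> ?S. ?R p u} = {fst p + snd p}" if "p \<in> A \<times> B" for p
    using that by (auto simp: S_image)
  ultimately show ?thesis
    by (simp add: card_cartesian_product)
qed

end

lemma card_gf2_subspace:
  assumes "gf2.subspace W" "finite W"
  shows "card W = 2 ^ gf2_dim W"
proof -
  obtain B where B: "B \<subseteq> W" "gf2.independent B" "W \<subseteq> gf2.span B" "card B = gf2_dim W"
    using gf2.basis_exists by blast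
  then have "gf2.span B = W"
    using gf2.span_minimal[OF B(1) assms(1)] by blast
  moreover have "finite B"
    using B(1) assms(2) by (rule finite_subset)
  ultimately show ?thesis
    using gf2.card_span_independent[OF B(2) _ finite_UNIV_bit] B(4) by (simp add: card_UNIV_bit)
qed

lemma gf2_dim_sums_Int:
  assumes "gf2.subspace A" "gf2.subspace B" "finite A" "finite B"
  shows "gf2_dim {x + y |x y. x \<in> A \<and> y \<in> B} + gf2_dim (A \<inter> B) = gf2_dim A + gf2_dim B"
proof -
  let ?S = "{x + y |x y. x \<in> A \<and> y \<in> B}"
  have "?S = (\<lambda>(x, y). x + y) ` (A \<times> B)"
    by auto
  then have "finite ?S"
    using assms(3,4) by simp
  then have "(2::nat) ^ (gf2_dim ?S + gf2_dim (A \<inter> B)) = 2 ^ (gf2_dim A + gf2_dim B)"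
    using gf2.card_sums_mult_card_Int[OF assms] assms
    by (simp add: power_add card_gf2_subspace gf2.subspace_sums gf2.subspace_inter)
  then show ?thesis
    by simp
qed

section \<open>Orthogonal complements\<close>

definition supported_on :: "'a set \<Rightarrow> ('a \<Rightarrow> bit) set" where
  "supported_on S = {g. \<forall>s. s \<notin> S \<longrightarrow> g s = 0}"

definition bit_pairing :: "'a set \<Rightarrow> ('a \<Rightarrow> bit) \<Rightarrow> ('a \<Rightarrow> bit) \<Rightarrow> bit" where
  "bit_pairing S g w = (\<Sum>s\<in>S. g s * w s)"

lemma bit_pairing_add_left: "bit_pairing S (g + h) w = bit_pairing S g w + bit_pairing S h w"
  unfolding bit_pairing_def plus_fun_apply by (simp only: distrib_right sum.distrib)

lemma bit_pairing_add_right: "bit_pairing S g (w + h) = bit_pairing S g w + bit_pairing S g h"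
  unfolding bit_pairing_def plus_fun_apply by (simp only: distrib_left sum.distrib)

lemma bit_pairing_scale_left: "bit_pairing S (gf2_scale c g) w = c * bit_pairing S g w"
  unfolding bit_pairing_def gf2_scale_def by (simp only: sum_distrib_left mult.assoc)

lemma bit_pairing_zero_left [simp]: "bit_pairing S 0 w = 0"
  by (simp add: bit_pairing_def)

lemma orth_eq: "orth S W = {g \<in> supported_on S. \<forall>w\<in>W. bit_pairing S g w = 0}"
  by (auto simp: orth_def supported_on_def bit_pairing_def)

lemma card_supported_on:
  assumes "finite S"
  shows "card (supported_on S) = 2 ^ card S"
proof -
  have "bij_betw (\<lambda>g. restrict g S) (supported_on S) (S \<rightarrow>\<^sub>E (UNIV :: bit set))"
    by (rule bij_betw_byWitness[where f' = "\<lambda>h s. if s \<in> S then h s else 0"])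
      (auto simp: supported_on_def fun_eq_iff PiE_iff)
  then show ?thesis
    using assms by (simp add: bij_betw_same_card card_PiE card_UNIV_bit)
qed

lemma supported_on_add: "g \<in> supported_on S \<Longrightarrow> h \<in> supported_on S \<Longrightarrow> g + h \<in> supported_on S"
  by (simp add: supported_on_def)

lemma supported_on_scale: "g \<in> supported_on S \<Longrightarrow> gf2_scale c g \<in> supported_on S"
  by (simp add: supported_on_def gf2_scale_def)

lemma finite_supported_on: "finite S \<Longrightarrow> finite (supported_on S)"
  using card_supported_on by (metis card_ge_0_finite zero_less_numeral zero_less_power)

lemma subspace_orth: "gf2.subspace (orth S W)"
proof (rule gf2.subspaceI)
  show "0 \<in> orth S W"
    by (simp add: orth_eq supported_on_def)
  show "x + y \<in> orth S W" if "x \<in> orth S W" "y \<in> orth S W" for x y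
    using that by (simp add: orth_eq supported_on_add bit_pairing_add_left)
  show "gf2_scale c x \<in> orth S W" if "x \<in> orth S W" for c x
    using that by (simp add: orth_eq supported_on_scale bit_pairing_scale_left)
qed

lemma card_zeros_of_additive_bit_map:
  fixes G :: "('a \<Rightarrow> bit) set" and \<chi> :: "('a \<Rightarrow> bit) \<Rightarrow> bit"
  assumes "finite G" and add_closed: "\<And>x y. x \<in> G \<Longrightarrow> y \<in> G \<Longrightarrow> x + y \<in> G"
    and additive: "\<And>x y. x \<in> G \<Longrightarrow> y \<in> G \<Longrightarrow> \<chi> (x + y) = \<chi> x + \<chi> y"
    and "g \<in> G" "\<chi> g = 1"
  shows "2 * card {x \<in> G. \<chi> x = 0} = card G"
proof -
  let ?K0 = "{x \<in> G. \<chi> x = 0}" and ?K1 = "{x \<in> G. \<chi> x = 1}"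
  have "bij_betw (\<lambda>x. x + g) ?K0 ?K1"
  proof (rule bij_betw_byWitness[where f' = "\<lambda>x. x + g"])
    show "\<forall>x\<in>?K0. x + g + g = x" "\<forall>x\<in>?K1. x + g + g = x"
      by (simp_all add: add.assoc)
    show "(\<lambda>x. x + g) ` ?K0 \<subseteq> ?K1" "(\<lambda>x. x + g) ` ?K1 \<subseteq> ?K0"
      using \<open>g \<in> G\<close> \<open>\<chi> g = 1\<close> by (auto simp: add_closed additive)
  qed
  then have "card ?K0 = card ?K1"
    by (rule bij_betw_same_card)
  moreover have "card G = card ?K0 + card ?K1"
  proof -
    have "card (?K0 \<union> ?K1) = card ?K0 + card ?K1"
      using assms(1) by (intro card_Un_disjoint) auto
    moreover have "G = ?K0 \<union> ?K1"
      by auto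
    ultimately show ?thesis
      by simp
  qed
  ultimately show ?thesis
    by simp
qed

lemma card_orthogonal_in_subspace:
  assumes "gf2.subspace W" "finite W" "g \<in> supported_on S"
  shows "2 * card {w \<in> W. bit_pairing S g w = 0} = card W + (if g \<in> orth S W then card W else 0)"
proof (cases "g \<in> orth S W")
  case True
  then have "{w \<in> W. bit_pairing S g w = 0} = W"
    by (auto simp: orth_eq)
  with True show ?thesis
    by simp
next
  case False
  then obtain w where "w \<in> W" "bit_pairing S g w = 1"
    using assms(3) by (auto simp: orth_eq)
  then have "2 * card {w \<in> W. bit_pairing S g w = 0} = card W"
    using assms(1,2) gf2.subspace_add
    by (intro card_zeros_of_additive_bit_map) (auto simp: bit_pairing_add_right)
  with False show ?thesis
    by simp
qed

lemma card_orthogonal_in_supported_on: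
  assumes "finite S" "w \<in> supported_on S"
  shows "2 * card {g \<in> supported_on S. bit_pairing S g w = 0}
    = card (supported_on S) + (if w = 0 then card (supported_on S) else 0)"
proof (cases "w = 0")
  case True
  then show ?thesis
    by (simp add: bit_pairing_def)
next
  case False
  then obtain s where s: "w s = 1"
    by (auto simp: fun_eq_iff)
  with assms(2) have "s \<in> S"
    by (auto simp: supported_on_def)
  let ?e = "\<lambda>t. if t = s then 1 else 0"
  have "bit_pairing S ?e w = (\<Sum>t\<in>S. if t = s then w t else 0)"
    unfolding bit_pairing_def by (rule sum.cong) auto
  with \<open>s \<in> S\<close> s assms(1) have "?e \<in> supported_on S" "bit_pairing S ?e w = 1"
    by (simp_all add: supported_on_def)
  then have "2 * card {g \<in> supported_on S. bit_pairing S g w = 0} = card (supported_on S)"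
    using assms(1)
    by (intro card_zeros_of_additive_bit_map) (auto simp: finite_supported_on supported_on_add bit_pairing_add_left)
  with False show ?thesis
    by simp
qed

lemma card_orth_mult_card:
  assumes "finite S" "gf2.subspace W" "W \<subseteq> supported_on S"
  shows "card (orth S W) * card W = 2 ^ card S"
proof -
  let ?G = "supported_on S" and ?O = "orth S W" and ?P = "\<lambda>g w. bit_pairing S g w = 0"
  have G: "finite ?G"
    using assms(1) by (rule finite_supported_on)
  have W: "finite W"
    using G assms(3) by (rule finite_subset[rotated])
  have O: "?O \<subseteq> ?G"
    by (auto simp: orth_eq)
  have "2 * (\<Sum>g\<in>?G. card {w \<in> W. ?P g w}) = (\<Sum>g\<in>?G. card W + (if g \<in> ?O then card W else 0))"
    unfolding sum_distrib_left using card_orthogonal_in_subspace[OF assms(2) W] by (rule sum.cong[OF refl])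
  also have "\<dots> = card ?G * card W + card ?O * card W"
    using G O by (simp add: sum.distrib sum.If_cases Int_absorb1)
  finally have by_rows: "2 * (\<Sum>g\<in>?G. card {w \<in> W. ?P g w}) = card ?G * card W + card ?O * card W" .
  have "2 * (\<Sum>w\<in>W. card {g \<in> ?G. ?P g w}) = (\<Sum>w\<in>W. card ?G + (if w = 0 then card ?G else 0))"
    unfolding sum_distrib_left using card_orthogonal_in_supported_on[OF assms(1)] assms(3)
    by (intro sum.cong[OF refl]) blast
  also have "\<dots> = card W * card ?G + card ?G"
    using W gf2.subspace_0[OF assms(2)] by (simp add: sum.distrib sum.If_cases Int_absorb1)
  finally have by_columns: "2 * (\<Sum>w\<in>W. card {g \<in> ?G. ?P g w}) = card W * card ?G + card ?G" .
  have "(\<Sum>g\<in>?G. card {w \<in> W. ?P g w}) = (\<Sum>w\<in>W. card {g \<in> ?G. ?P g w})"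
    using G W by (rule sum_multicount_gen) simp
  with by_rows by_columns have "card ?O * card W = card ?G"
    by (simp add: mult.commute)
  with assms(1) show ?thesis
    by (simp add: card_supported_on)
qed

lemma gf2_dim_orth:
  assumes "finite S" "gf2.subspace W" "W \<subseteq> supported_on S"
  shows "gf2_dim (orth S W) + gf2_dim W = card S"
proof -
  have "finite (supported_on S)"
    using assms(1) by (rule finite_supported_on)
  then have "finite W" "finite (orth S W)"
    using assms(3) by (auto intro: finite_subset simp: orth_eq)
  then have "(2::nat) ^ (gf2_dim (orth S W) + gf2_dim W) = 2 ^ card S"
    using card_orth_mult_card[OF assms] assms(2)
    by (simp add: power_add card_gf2_subspace subspace_orth)
  then show ?thesis
    by simp
qed

section \<open>Klein maps and their coboundary spaces\<close>

definition klein_map :: "'v set \<Rightarrow> ('v \<Rightarrow> 'v) \<Rightarrow> ('v \<Rightarrow> 'v) \<Rightarrow> ('v \<Rightarrow> 'v) \<Rightarrow> ('v \<Rightarrow> 'v) \<Rightarrow> bool" where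
  "klein_map V a p q r \<longleftrightarrow>
     perfect_matching_on V a \<and> perfect_matching_on V p \<and> perfect_matching_on V q \<and> perfect_matching_on V r \<and>
     (\<forall>x\<in>V. p (q x) = r x \<and> q (p x) = r x \<and> q (r x) = p x \<and> r (q x) = p x \<and> r (p x) = q x \<and> p (r x) = q x)"

lemma klein_map_permute:
  assumes "klein_map V a p q r"
  shows "klein_map V a q p r" "klein_map V a p r q" "klein_map V a r q p"
    "klein_map V a q r p" "klein_map V a r p q"
  using assms unfolding klein_map_def by auto

lemma perfect_matching_onD:
  "perfect_matching_on V m \<Longrightarrow> x \<in> V \<Longrightarrow> m x \<in> V \<and> m (m x) = x \<and> m x \<noteq> x"
  unfolding perfect_matching_on_def by blast

lemma klein_map_of_is_map:
  assumes "is_map V a v f"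
  shows "klein_map V a v f (v \<circ> f)"
proof -
  have a: "perfect_matching_on V a" and v: "perfect_matching_on V v" and f: "perfect_matching_on V f"
    and four_cycle: "\<And>x. x \<in> V \<Longrightarrow> v x \<noteq> f x \<and> v (f (v (f x))) = x"
    using assms unfolding is_map_def by auto
  have vV: "v x \<in> V" "v (v x) = x" and fV: "f x \<in> V" "f (f x) = x" if "x \<in> V" for x
    using perfect_matching_onD[OF v that] perfect_matching_onD[OF f that] by auto
  have commute: "f (v x) = v (f x)" if "x \<in> V" for x
  proof -
    have "v (f (v x)) = f x"
      using four_cycle[OF fV(1)[OF that]] fV(2)[OF that] by simp
    then have "v (v (f (v x))) = v (f x)"
      by simp
    then show ?thesis
      using vV(2)[OF fV(1)[OF vV(1)[OF that]]] by simp
  qed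
  have "perfect_matching_on V (v \<circ> f)"
    unfolding perfect_matching_on_def
  proof (intro ballI conjI)
    fix x assume x: "x \<in> V"
    show "(v \<circ> f) x \<in> V" "(v \<circ> f) ((v \<circ> f) x) = x"
      using vV(1)[OF fV(1)[OF x]] four_cycle[OF x] by simp_all
    show "(v \<circ> f) x \<noteq> x"
    proof
      assume "(v \<circ> f) x = x"
      then have "v (v (f x)) = v x"
        by simp
      with vV(2)[OF fV(1)[OF x]] four_cycle[OF x] show False
        by simp
    qed
  qed
  moreover have "v (f x) = (v \<circ> f) x \<and> f (v x) = (v \<circ> f) x \<and> f ((v \<circ> f) x) = v x
      \<and> (v \<circ> f) (f x) = v x \<and> (v \<circ> f) (v x) = f x \<and> v ((v \<circ> f) x) = f x" if "x \<in> V" for x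
    using commute[OF that] commute[OF fV(1)[OF that]] fV(2)[OF that] vV(2)[OF fV(1)[OF that]] by simp
  ultimately show ?thesis
    unfolding klein_map_def using a v f by blast
qed

lemma cycle_of_step:
  assumes "perfect_matching_on V m1" "perfect_matching_on V m2" "x \<in> V"
  shows "cycle_of V m1 m2 (m1 x) = cycle_of V m1 m2 x" "cycle_of V m1 m2 (m2 x) = cycle_of V m1 m2 x"
proof -
  let ?R = "{(u, m1 u) | u. u \<in> V} \<union> {(u, m2 u) | u. u \<in> V}"
  have back_and_forth: "{z. (y, z) \<in> ?R\<^sup>*} = {z. (x, z) \<in> ?R\<^sup>*}" if "(x, y) \<in> ?R" "(y, x) \<in> ?R" for y
    using that by (auto intro: converse_rtrancl_into_rtrancl)
  have "(m1 x, m1 (m1 x)) \<in> ?R" "(m2 x, m2 (m2 x)) \<in> ?R"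
    using perfect_matching_onD[OF assms(1,3)] perfect_matching_onD[OF assms(2,3)] by blast+
  then have "(m1 x, x) \<in> ?R" "(m2 x, x) \<in> ?R"
    using perfect_matching_onD[OF assms(1,3)] perfect_matching_onD[OF assms(2,3)] by simp_all
  moreover have "(x, m1 x) \<in> ?R" "(x, m2 x) \<in> ?R"
    using assms(3) by blast+
  ultimately show "cycle_of V m1 m2 (m1 x) = cycle_of V m1 m2 x" "cycle_of V m1 m2 (m2 x) = cycle_of V m1 m2 x"
    unfolding cycle_of_def using back_and_forth by simp_all
qed

lemma cycle_of_invariant:
  assumes "\<forall>x\<in>V. P (m1 x) = P x \<and> P (m2 x) = P x" and "y \<in> cycle_of V m1 m2 x"
  shows "P y = P x"
  using assms(2) unfolding cycle_of_def mem_Collect_eq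
proof (induction rule: rtrancl_induct)
  case (step y z)
  then show ?case
    using assms(1) by auto
qed simp

lemma obtain_cycle_set:
  assumes "\<forall>x\<in>V. P (m1 x) = P x \<and> P (m2 x) = P x"
  obtains U where "U \<subseteq> graph_vertices V m2 m1" "\<forall>x\<in>V. cycle_of V m1 m2 x \<in> U \<longleftrightarrow> P x"
proof
  let ?U = "cycle_of V m1 m2 ` {x \<in> V. P x}"
  show "?U \<subseteq> graph_vertices V m2 m1"
    unfolding graph_vertices_def by blast
  have "P x" if "cycle_of V m1 m2 x = cycle_of V m1 m2 y" "P y" for x y
  proof -
    have "x \<in> cycle_of V m1 m2 y"
      using that(1) by (auto simp: cycle_of_def)
    then show "P x"
      using cycle_of_invariant[OF assms] that(2) by blast
  qed
  then show "\<forall>x\<in>V. cycle_of V m1 m2 x \<in> ?U \<longleftrightarrow> P x"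
    by blast
qed

lemma square_klein_map:
  assumes "klein_map V a p q r" "x \<in> V"
  shows "square p q x = {x, p x, q x, r x}"
  using assms unfolding klein_map_def square_def by auto

lemma square_klein_map_swap:
  assumes "klein_map V a p q r" "x \<in> V"
  shows "square q p x = square p q x" "square p r x = square p q x"
  using square_klein_map[OF assms] square_klein_map[OF klein_map_permute(1)[OF assms(1)] assms(2)]
    square_klein_map[OF klein_map_permute(2)[OF assms(1)] assms(2)]
  by (simp_all add: insert_commute)

lemma squares_klein_map_swap:
  assumes "klein_map V a p q r"
  shows "squares V q p = squares V p q" "squares V p r = squares V p q"
  unfolding squares_def using square_klein_map_swap[OF assms] by (simp_all cong: image_cong)

definition crosses :: "'v set \<Rightarrow> ('v \<Rightarrow> 'v) \<Rightarrow> ('v \<Rightarrow> 'v) \<Rightarrow> ('v \<Rightarrow> 'v) \<Rightarrow> 'v set set \<Rightarrow> 'v \<Rightarrow> bool" where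
  "crosses V a p q U x \<longleftrightarrow> (cycle_of V p a x \<in> U) \<noteq> (cycle_of V p a (q x) \<in> U)"

lemma crosses_square_invariant:
  assumes "klein_map V a p q r" "x \<in> V" "y \<in> square p q x"
  shows "crosses V a p q U y = crosses V a p q U x"
proof -
  have p: "perfect_matching_on V p" and pm_a: "perfect_matching_on V a" and q: "perfect_matching_on V q"
    and rel: "q (p x) = r x" "q (r x) = p x" "p (q x) = r x"
    using assms(1,2) unfolding klein_map_def by auto
  have "cycle_of V p a (p x) = cycle_of V p a x" "cycle_of V p a (r x) = cycle_of V p a (q x)"
    using cycle_of_step(1)[OF p pm_a assms(2)] cycle_of_step(1)[OF p pm_a, of "q x"]
      perfect_matching_onD[OF q assms(2)] rel(3) by simp_all
  moreover have "q (q x) = x"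
    using perfect_matching_onD[OF q assms(2)] by simp
  moreover have "y = x \<or> y = p x \<or> y = q x \<or> y = r x"
    using assms(3) unfolding square_klein_map[OF assms(1,2)] by blast
  ultimately show ?thesis
    using rel(1,2) unfolding crosses_def by auto
qed

lemma mem_coboundary_iff:
  "s \<in> coboundary V a p q U \<longleftrightarrow> (\<exists>x\<in>V. s = square p q x \<and> crosses V a p q U x)"
  unfolding coboundary_def squares_def crosses_def by blast

lemma square_mem_coboundary_iff:
  assumes "klein_map V a p q r" "x \<in> V"
  shows "square p q x \<in> coboundary V a p q U \<longleftrightarrow> crosses V a p q U x"
proof -
  have "crosses V a p q U y = crosses V a p q U x" if "square p q x = square p q y" for y
  proof -
    have "y \<in> square p q y"
      by (simp add: square_def)
    with that show ?thesis
      using crosses_square_invariant[OF assms] by simp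
  qed
  then show ?thesis
    using assms(2) unfolding mem_coboundary_iff by blast
qed

lemma indic_eq_iff: "indic A s = indic B t \<longleftrightarrow> (s \<in> A \<longleftrightarrow> t \<in> B)"
  by (simp add: indic_def)

lemma indic_add: "indic A + indic B = indic ((A - B) \<union> (B - A))"
  by (auto simp: indic_def fun_eq_iff)

lemma coboundary_subset_squares: "coboundary V a p q U \<subseteq> squares V p q"
  unfolding coboundary_def by blast

lemma coboundary_sym_diff:
  assumes "klein_map V a p q r"
  shows "coboundary V a p q ((U1 - U2) \<union> (U2 - U1))
    = (coboundary V a p q U1 - coboundary V a p q U2) \<union> (coboundary V a p q U2 - coboundary V a p q U1)"
    (is "?lhs = ?rhs")
proof (rule set_eqI)
  fix s
  show "s \<in> ?lhs \<longleftrightarrow> s \<in> ?rhs"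
  proof (cases "s \<in> squares V p q")
    case True
    then obtain x where "x \<in> V" "s = square p q x"
      unfolding squares_def by blast
    moreover have "crosses V a p q ((U1 - U2) \<union> (U2 - U1)) x \<longleftrightarrow> crosses V a p q U1 x \<noteq> crosses V a p q U2 x"
      unfolding crosses_def by blast
    ultimately show ?thesis
      using square_mem_coboundary_iff[OF assms] by auto
  next
    case False
    then show ?thesis
      using coboundary_subset_squares by blast
  qed
qed

definition coboundaries :: "'v set \<Rightarrow> ('v \<Rightarrow> 'v) \<Rightarrow> ('v \<Rightarrow> 'v) \<Rightarrow> ('v \<Rightarrow> 'v) \<Rightarrow> ('v set \<Rightarrow> bit) set" where
  "coboundaries V a p q = {indic (coboundary V a p q U) | U. U \<subseteq> graph_vertices V a p}"

lemma subspace_coboundaries: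
  assumes "klein_map V a p q r"
  shows "gf2.subspace (coboundaries V a p q)"
proof (rule gf2.subspaceI)
  have "indic (coboundary V a p q {}) = 0"
    by (simp add: coboundary_def indic_def fun_eq_iff)
  then show "0 \<in> coboundaries V a p q"
    unfolding coboundaries_def by (metis (mono_tags, lifting) empty_subsetI mem_Collect_eq)
  show "g + h \<in> coboundaries V a p q" if "g \<in> coboundaries V a p q" "h \<in> coboundaries V a p q" for g h
    using that unfolding coboundaries_def
    by (auto simp: indic_add coboundary_sym_diff[OF assms, symmetric])
  show "gf2_scale c g \<in> coboundaries V a p q" if "g \<in> coboundaries V a p q" for c g
    using that \<open>0 \<in> coboundaries V a p q\<close> by (cases c) (simp_all add: gf2.scale_one)
qed

lemma cob_space_eq_coboundaries:
  assumes "klein_map V a p q r"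
  shows "cob_space V a p q = coboundaries V a p q"
  unfolding cob_space_def coboundaries_def[symmetric]
  using subspace_coboundaries[OF assms] by (rule gf2.span_eq_iff[THEN iffD2])

lemma cob_space_subset_supported_on:
  assumes "klein_map V a p q r"
  shows "cob_space V a p q \<subseteq> supported_on (squares V p q)"
  unfolding cob_space_eq_coboundaries[OF assms] coboundaries_def
  using coboundary_subset_squares by (fastforce simp: supported_on_def indic_def)

lemma finite_cob_space:
  assumes "klein_map V a p q r" "finite V"
  shows "finite (cob_space V a p q)"
  using cob_space_subset_supported_on[OF assms(1)] finite_supported_on assms(2)
  by (metis finite_imageI finite_subset squares_def)

lemma coboundary_eqI:
  assumes "\<And>x. x \<in> V \<Longrightarrow> square p' q' x = square p q x"
    and "\<And>x. x \<in> V \<Longrightarrow> crosses V a p' q' U' x = crosses V a p q U x"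
  shows "coboundary V a p' q' U' = coboundary V a p q U"
  unfolding set_eq_iff mem_coboundary_iff using assms by metis

lemma cob_space_klein_map_swap:
  assumes "klein_map V a p q r"
  shows "cob_space V a p r = cob_space V a p q"
proof -
  have p: "perfect_matching_on V p" and pm_a: "perfect_matching_on V a" and q: "perfect_matching_on V q"
    and rel: "\<And>x. x \<in> V \<Longrightarrow> p (q x) = r x"
    using assms unfolding klein_map_def by auto
  have "crosses V a p r U x = crosses V a p q U x" if "x \<in> V" for U x
    using cycle_of_step(1)[OF p pm_a, of "q x"] perfect_matching_onD[OF q that] rel[OF that]
    unfolding crosses_def by simp
  then have "coboundary V a p r U = coboundary V a p q U" for U
    using square_klein_map_swap(2)[OF assms] by (intro coboundary_eqI)
  then show ?thesis
    unfolding cob_space_def by simp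
qed

lemma cob_space_cong:
  assumes "\<And>x. x \<in> V \<Longrightarrow> p' x = p x" "\<And>x. x \<in> V \<Longrightarrow> q' x = q x"
    and "\<And>x. x \<in> V \<Longrightarrow> q x \<in> V"
  shows "cob_space V a p' q' = cob_space V a p q"
proof -
  have "{(u, p' u) | u. u \<in> V} = {(u, p u) | u. u \<in> V}"
    using assms(1) by force
  then have cycles: "cycle_of V p' a = cycle_of V p a"
    unfolding cycle_of_def by simp
  have squares: "square p' q' x = square p q x" if "x \<in> V" for x
    unfolding square_def using assms that by simp
  then have "squares V p' q' = squares V p q"
    unfolding squares_def by (simp cong: image_cong)
  then have "coboundary V a p' q' U = coboundary V a p q U" for U
    unfolding coboundary_def cycles using squares assms(2) by (metis (no_types, lifting))
  then show ?thesis
    unfolding cob_space_def graph_vertices_def cycles by simp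
qed

lemma obtain_cut_of_third_matching:
  assumes "klein_map V a p q r"
    and same_cut: "\<And>x. x \<in> V \<Longrightarrow> crosses V a p q U x \<longleftrightarrow> crosses V a q p U' x"
  obtains U'' where "U'' \<subseteq> graph_vertices V a r"
    "\<And>x. x \<in> V \<Longrightarrow> crosses V a r p U'' x \<longleftrightarrow> crosses V a p q U x"
proof -
  have pm: "perfect_matching_on V a" "perfect_matching_on V p" "perfect_matching_on V q"
    and rel: "\<And>x. x \<in> V \<Longrightarrow> p (q x) = r x \<and> q (p x) = r x"
    using assms(1) unfolding klein_map_def by auto
  define W where "W x \<longleftrightarrow> cycle_of V p a x \<in> U" for x
  define W' where "W' x \<longleftrightarrow> cycle_of V q a x \<in> U'" for x
  have W_step: "W (p x) = W x" "W (a x) = W x" "W' (q x) = W' x" "W' (a x) = W' x" if "x \<in> V" for x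
    unfolding W_def W'_def using cycle_of_step[OF pm(2,1) that] cycle_of_step[OF pm(3,1) that] by simp_all
  have W_cut: "(W x \<noteq> W (q x)) \<longleftrightarrow> (W' x \<noteq> W' (p x))" if "x \<in> V" for x
    using same_cut[OF that] unfolding crosses_def W_def W'_def .
  define X where "X x \<longleftrightarrow> W x \<noteq> W' x" for x
  have "X (r x) = X x \<and> X (a x) = X x" if "x \<in> V" for x
  proof -
    have "p x \<in> V" "q x \<in> V"
      using perfect_matching_onD[OF pm(2) that] perfect_matching_onD[OF pm(3) that] by simp_all
    then have "W (r x) = W (q x)" "W' (r x) = W' (p x)"
      using W_step(1)[of "q x"] W_step(3)[of "p x"] rel[OF that] by simp_all
    then show ?thesis
      unfolding X_def using W_cut[OF that] W_step(2,4)[OF that] by blast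
  qed
  then obtain U'' where U'': "U'' \<subseteq> graph_vertices V a r" "\<forall>x\<in>V. cycle_of V r a x \<in> U'' \<longleftrightarrow> X x"
    using obtain_cycle_set[of V X r a] by blast
  have "crosses V a r p U'' x \<longleftrightarrow> crosses V a p q U x" if "x \<in> V" for x
  proof -
    have "p x \<in> V"
      using perfect_matching_onD[OF pm(2) that] by simp
    then have "crosses V a r p U'' x \<longleftrightarrow> X x \<noteq> X (p x)"
      unfolding crosses_def using U''(2) that by simp
    also have "\<dots> \<longleftrightarrow> W x \<noteq> W (q x)"
      unfolding X_def using W_cut[OF that] W_step(1)[OF that] by blast
    finally show ?thesis
      unfolding crosses_def W_def .
  qed
  with U''(1) show ?thesis
    using that by blast
qed

lemma cob_space_Int_subset:
  assumes "klein_map V a p q r"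
  shows "cob_space V a p q \<inter> cob_space V a q p \<subseteq> cob_space V a r p"
  unfolding cob_space_eq_coboundaries[OF assms] cob_space_eq_coboundaries[OF klein_map_permute(1)[OF assms]]
    cob_space_eq_coboundaries[OF klein_map_permute(5)[OF assms]]
proof
  fix g assume "g \<in> coboundaries V a p q \<inter> coboundaries V a q p"
  then obtain U U' where U: "g = indic (coboundary V a p q U)"
    and U': "g = indic (coboundary V a q p U')"
    unfolding coboundaries_def by blast
  have "crosses V a p q U x \<longleftrightarrow> crosses V a q p U' x" if "x \<in> V" for x
  proof -
    have "indic (coboundary V a p q U) (square p q x) = indic (coboundary V a q p U') (square q p x)"
      using U U' square_klein_map_swap(1)[OF assms that] by simp
    then show ?thesis
      unfolding indic_eq_iff square_mem_coboundary_iff[OF assms that]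
        square_mem_coboundary_iff[OF klein_map_permute(1)[OF assms] that] .
  qed
  then obtain U'' where U'': "U'' \<subseteq> graph_vertices V a r"
    "\<And>x. x \<in> V \<Longrightarrow> crosses V a r p U'' x \<longleftrightarrow> crosses V a p q U x"
    using obtain_cut_of_third_matching[OF assms] by blast
  have "square r p x = square p q x" if "x \<in> V" for x
    using square_klein_map_swap(1)[OF klein_map_permute(2)[OF assms] that]
      square_klein_map_swap(2)[OF assms that] by simp
  then have "coboundary V a r p U'' = coboundary V a p q U"
    using U''(2) by (intro coboundary_eqI)
  with U U''(1) show "g \<in> coboundaries V a r p"
    unfolding coboundaries_def by (metis (mono_tags, lifting) mem_Collect_eq)
qed

section \<open>The deficiency\<close>

lemma deficiency_klein_map:
  assumes "klein_map V a p q r" "finite V"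
  shows "deficiency V (a, p, q) = int (card (squares V p q)) - int (gf2_dim (cob_space V a p q))
    - int (gf2_dim (cob_space V a q r)) - int (gf2_dim (cob_space V a r p))
    + int (gf2_dim (cob_space V a p q \<inter> cob_space V a q r \<inter> cob_space V a r p))"
proof -
  let ?S = "squares V p q"
  let ?P = "cob_space V a p q" and ?Q = "cob_space V a q r" and ?R = "cob_space V a r p"
  have kq: "klein_map V a q r p" and kr: "klein_map V a r p q"
    using klein_map_permute[OF assms(1)] by simp_all
  have F: "cob_space V a q p = ?Q"
    by (rule cob_space_klein_map_swap[OF kq])
  \<comment> \<open>The definition of the deficiency uses p \<circ> q, which agrees with r only on V.\<close>
  have "cob_space V a (p \<circ> q) q = cob_space V a r q"
    using assms(1) unfolding klein_map_def perfect_matching_on_def by (intro cob_space_cong) auto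
  also have "\<dots> = ?R"
    by (rule cob_space_klein_map_swap[OF kr])
  finally have Z: "cob_space V a (p \<circ> q) q = ?R" .
  have "finite ?S"
    using assms(2) by (simp add: squares_def)
  then have orth: "gf2_dim (orth ?S ?P) + gf2_dim ?P = card ?S"
    using gf2.subspace_span cob_space_subset_supported_on[OF assms(1)]
    unfolding cob_space_def by (intro gf2_dim_orth) auto
  have sums: "gf2_dim {x + y |x y. x \<in> ?Q \<and> y \<in> ?R} + gf2_dim (?Q \<inter> ?R) = gf2_dim ?Q + gf2_dim ?R"
    using finite_cob_space[OF kq assms(2)] finite_cob_space[OF kr assms(2)]
    unfolding cob_space_def by (intro gf2_dim_sums_Int gf2.subspace_span)
  have "?Q \<inter> ?R \<subseteq> ?P"
    using cob_space_Int_subset[OF kq] cob_space_klein_map_swap[OF kr] by simp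
  then have "?Q \<inter> ?R = ?P \<inter> ?Q \<inter> ?R"
    by blast
  then show ?thesis
    unfolding deficiency_def Let_def prod.case F Z using orth sums by simp
qed

lemma deficiency_klein_map_swap:
  assumes "klein_map V a p q r" "finite V"
  shows "deficiency V (a, q, p) = deficiency V (a, p, q)" "deficiency V (a, p, r) = deficiency V (a, p, q)"
proof -
  have "cob_space V a q p = cob_space V a q r" "cob_space V a p r = cob_space V a p q"
    "cob_space V a r q = cob_space V a r p"
    using cob_space_klein_map_swap klein_map_permute assms(1) by metis+
  then show "deficiency V (a, q, p) = deficiency V (a, p, q)" "deficiency V (a, p, r) = deficiency V (a, p, q)"
    using deficiency_klein_map[OF assms] deficiency_klein_map[OF klein_map_permute(1)[OF assms(1)] assms(2)]
      deficiency_klein_map[OF klein_map_permute(2)[OF assms(1)] assms(2)] squares_klein_map_swap[OF assms(1)]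
    by (simp_all add: Int_ac)
qed

theorem lemma2p4:
  fixes V :: "'v set" and a v f :: "'v \<Rightarrow> 'v"
  assumes "is_map V a v f"
    and "X \<in> Gamma a v f" and "Y \<in> Gamma a v f"
  shows "deficiency V X = deficiency V Y"
proof -
  let ?z = "v \<circ> f"
  have fin: "finite V"
    using assms(1) by (simp add: is_map_def)
  have k: "klein_map V a v f ?z"
    using assms(1) by (rule klein_map_of_is_map)
  note swap = deficiency_klein_map_swap[OF _ fin]
  have "deficiency V (a, f, v) = deficiency V (a, v, f)" "deficiency V (a, v, ?z) = deficiency V (a, v, f)"
    by (rule swap[OF k])+
  moreover have "deficiency V (a, f, ?z) = deficiency V (a, f, v)"
    by (rule swap(2)[OF klein_map_permute(1)[OF k]])
  moreover have "deficiency V (a, ?z, f) = deficiency V (a, f, ?z)"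
    by (rule swap(1)[OF klein_map_permute(4)[OF k]])
  moreover have "deficiency V (a, ?z, v) = deficiency V (a, ?z, f)"
    by (rule swap(2)[OF klein_map_permute(3)[OF k]])
  ultimately have "deficiency V W = deficiency V (a, v, f)" if "W \<in> Gamma a v f" for W
    using that unfolding Gamma_def Let_def by auto
  then show ?thesis
    using assms(2,3) by metis
qed

end
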